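(* Let $A_1,A_2,A_3$ be $m\times m$ complex positive semidefinite matrices. Then $$\operatorname{per}(A_1+A_2+A_3)+\operatorname{per}A_1+\operatorname{per}A_2+\operatorname{per}A_3\;\ge\;\operatorname{per}(A_1+A_2)+\operatorname{per}(A_1+A_3)+\operatorname{per}(A_2+A_3).$$
   Context: The permanent of an $m\times m$ matrix $X=(x_{ij})$ is $\operatorname{per}X=\sum_{\sigma\in S_m}\prod_{t=1}^m x_{t\,\sigma(t)}$. *)

theory Defs
  imports "HOL-Analysis.Analysis" "HOL-Library.Complex_Order"
begin

definition per :: "'a::comm_semiring_1^'n::finite^'n \<Rightarrow> 'a" where
  "per A = (\<Sum>p | p permutes (UNIV :: 'n set). \<Prod>i\<in>UNIV. A $ i $ p i)"

text \<open>Complex positive semidefinite: Hermitian with nonnegative quadratic form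
  x^* A x (order on complex from Complex_Order: nonnegative real).\<close>
definition psd :: "complex^'n::finite^'n \<Rightarrow> bool" where
  "psd A \<longleftrightarrow> (\<forall>i j. A $ i $ j = cnj (A $ j $ i)) \<and>
     (\<forall>x :: complex^'n. 0 \<le> (\<Sum>i\<in>UNIV. \<Sum>j\<in>UNIV. cnj (x $ i) * A $ i $ j * x $ j))"

end

theory Submission
  imports Defs "HOL-Combinatorics.Permutations"
begin

text \<open>
  Expanding the products in m! per (\<Sum>k\<in>K. A k) = \<Sum>\<rho> \<tau>. \<Prod>t. (\<Sum>k\<in>K. A k) (\<rho> t) (\<tau> t),
  the sum runs over all colourings f of the rows by K, with weights
  W f = \<Sum>\<rho> \<tau>. \<Prod>t. A (f t) (\<rho> t) (\<tau> t).  Such a weight is the quadratic form of the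
  tensor product of the matrices A (f t) at the indicator vector of the permutations, hence
  nonnegative when every A k is positive semidefinite: a tensor product of Gram matrices is
  a Gram matrix.  Grouping the colourings by their image and inverting by Moebius, the
  alternating sum \<Sum>T\<subseteq>K. (-1)^|K - T| per (\<Sum>k\<in>T. A k) is 1/m! times the total weight
  of the surjective colourings, so it is nonnegative.  For |K| = 3 this is the stated
  inequality, the term of T = {} being per 0 = 0.
\<close>

definition quad_form :: "('n::finite \<Rightarrow> 'n \<Rightarrow> complex) \<Rightarrow> ('n \<Rightarrow> complex) \<Rightarrow> complex" where
  "quad_form B x = (\<Sum>i\<in>UNIV. \<Sum>j\<in>UNIV. cnj (x i) * B i j * x j)"

definition psd_fun :: "('n::finite \<Rightarrow> 'n \<Rightarrow> complex) \<Rightarrow> bool" where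
  "psd_fun B \<longleftrightarrow> (\<forall>i j. B i j = cnj (B j i)) \<and> (\<forall>x. 0 \<le> quad_form B x)"

lemma psd_fun_hermitian: "psd_fun B \<Longrightarrow> B i j = cnj (B j i)"
  unfolding psd_fun_def by blast

lemma psd_fun_quad_form_nonneg: "psd_fun B \<Longrightarrow> 0 \<le> quad_form B x"
  unfolding psd_fun_def by blast

lemma psd_imp_psd_fun:
  fixes A :: "complex^'n::finite^'n"
  assumes "psd A"
  shows "psd_fun (\<lambda>i j. A $ i $ j)"
proof -
  have herm: "\<forall>i j. A $ i $ j = cnj (A $ j $ i)"
    and nonneg: "\<forall>y::complex^'n. 0 \<le> (\<Sum>i\<in>UNIV. \<Sum>j\<in>UNIV. cnj (y $ i) * A $ i $ j * y $ j)"
    using assms unfolding psd_def by blast+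
  have "0 \<le> quad_form (\<lambda>i j. A $ i $ j) x" for x
    using spec[OF nonneg, of "\<chi> i. x i"] by (simp add: quad_form_def)
  with herm show ?thesis
    unfolding psd_fun_def by blast
qed

lemma quad_form_add_axis:
  "quad_form B (\<lambda>i. x i + c * (if i = s then 1 else 0)) =
    quad_form B x + c * (\<Sum>i\<in>UNIV. cnj (x i) * B i s) + cnj c * (\<Sum>j\<in>UNIV. B s j * x j)
      + cnj c * c * B s s"
proof -
  have row: "(\<Sum>j\<in>UNIV. cnj (x i + c * (if i = s then 1 else 0)) * B i j
                  * (x j + c * (if j = s then 1 else 0)))
      = (\<Sum>j\<in>UNIV. cnj (x i) * B i j * x j) + c * cnj (x i) * B i s
        + (if i = s then cnj c * (\<Sum>j\<in>UNIV. B s j * x j) + cnj c * c * B s s else 0)" for i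
    by (simp add: algebra_simps sum.distrib sum_distrib_left if_distrib[of "\<lambda>y. _ * y"] cong: if_cong)
  show ?thesis
    unfolding quad_form_def row by (simp add: sum.distrib sum_distrib_left algebra_simps)
qed

lemma psd_fun_diag_nonneg: "psd_fun B \<Longrightarrow> 0 \<le> B s s"
  using psd_fun_quad_form_nonneg[of B "\<lambda>i. 0 + 1 * (if i = s then 1 else 0)"]
  by (simp only: quad_form_add_axis) (simp add: quad_form_def)

lemma psd_fun_zero_diag_imp_zero_row:
  assumes B: "psd_fun B" and zero: "B s s = 0"
  shows "B s j = 0"
proof (rule ccontr)
  define b where "b = B s j"
  assume "B s j \<noteq> 0"
  then have b_pos: "cmod b ^ 2 > 0"
    by (simp add: b_def)
  define r where "r = (Re (B j j) + 1) / (2 * cmod b ^ 2)"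
  define e where "e = (\<lambda>i::'a. if i = j then 1 else (0::complex))"
  have "0 \<le> quad_form B (\<lambda>i. e i + (- of_real r * b) * (if i = s then 1 else 0))"
    using B by (rule psd_fun_quad_form_nonneg)
  also have "\<dots> = B j j - of_real r * (b * cnj b) - of_real r * (cnj b * b)"
    unfolding quad_form_add_axis using psd_fun_hermitian[OF B, of j s] zero
    by (simp add: quad_form_def e_def b_def if_distrib[of cnj] if_distrib[of "\<lambda>y. y * _"]
        if_distrib[of "\<lambda>y. _ * y"] cong: if_cong)
  also have "\<dots> = of_real (Re (B j j) - 2 * r * cmod b ^ 2) + \<i> * of_real (Im (B j j))"
    by (simp add: complex_eq_iff complex_norm_square[symmetric] algebra_simps)
  also have "2 * r * cmod b ^ 2 = Re (B j j) + 1"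
    using b_pos by (simp add: r_def)
  finally show False
    by (simp add: less_eq_complex_def)
qed

lemma psd_fun_diag_real: "psd_fun B \<Longrightarrow> cnj (B s s) = B s s"
  using psd_fun_hermitian[of B s s] by simp

text \<open>If B s s = 0 the Schur complement is B itself (division by zero yields 0); its row
  and column s then vanish by psd_fun_zero_diag_imp_zero_row.\<close>

lemma psd_fun_schur_complement:
  assumes B: "psd_fun B"
  shows "psd_fun (\<lambda>i j. B i j - B i s * B s j / B s s)"
proof (cases "B s s = 0")
  case True
  then show ?thesis using B by simp
next
  case False
  have herm: "B i j = cnj (B j i)" for i j
    using B by (rule psd_fun_hermitian)
  show ?thesis
    unfolding psd_fun_def
  proof (intro conjI allI)
    fix i j
    show "B i j - B i s * B s j / B s s = cnj (B j i - B j s * B s i / B s s)"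
      using herm[of i j] herm[of i s] herm[of s j] psd_fun_diag_real[OF B, of s] by simp
  next
    fix x
    define w where "w = (\<Sum>j\<in>UNIV. B s j * x j)"
    have w_cnj: "(\<Sum>i\<in>UNIV. cnj (x i) * B i s) = cnj w"
      unfolding w_def cnj_sum by (simp add: herm[of _ s] mult.commute)
    have "0 \<le> quad_form B (\<lambda>i. x i + (- w / B s s) * (if i = s then 1 else 0))"
      using B by (rule psd_fun_quad_form_nonneg)
    also have "\<dots> = quad_form B x - cnj w * w / B s s"
      unfolding quad_form_add_axis w_cnj w_def[symmetric]
      using False psd_fun_diag_real[OF B, of s] by (simp add: field_simps)
    also have "cnj w * w / B s s = (\<Sum>i\<in>UNIV. \<Sum>j\<in>UNIV. cnj (x i) * (B i s * B s j / B s s) * x j)"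
    proof -
      have "(\<Sum>i\<in>UNIV. \<Sum>j\<in>UNIV. cnj (x i) * (B i s * B s j / B s s) * x j)
          = (\<Sum>i\<in>UNIV. cnj (x i) * B i s) * (\<Sum>j\<in>UNIV. B s j * x j) / B s s"
        unfolding sum_product sum_divide_distrib by (simp add: ac_simps)
      then show ?thesis by (simp add: w_cnj w_def)
    qed
    finally show "0 \<le> quad_form (\<lambda>i j. B i j - B i s * B s j / B s s) x"
      by (simp add: quad_form_def algebra_simps sum_subtractf)
  qed
qed

lemma psd_fun_schur_complement_row:
  assumes "psd_fun B"
  shows "B s j - B s s * B s j / B s s = 0" and "B j s - B j s * B s s / B s s = 0"
  using psd_fun_zero_diag_imp_zero_row[OF assms, of s j] psd_fun_hermitian[OF assms, of j s]
  by (cases "B s s = 0"; simp)+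

lemma psd_fun_rank_one_part:
  assumes B: "psd_fun B"
  obtains v where "\<And>i j. B i s * B s j / B s s = cnj (v i) * v j"
proof -
  define d where "d = Re (B s s)"
  have "B s s = of_real d" "d \<ge> 0"
    using psd_fun_diag_nonneg[OF B, of s] by (auto simp: d_def less_eq_complex_def complex_eq_iff)
  then have sqrt_d: "complex_of_real (sqrt d) * of_real (sqrt d) = B s s"
    unfolding of_real_mult[symmetric] by simp
  have "B i s * B s j / B s s = cnj (B s i / of_real (sqrt d)) * (B s j / of_real (sqrt d))" for i j
    using psd_fun_hermitian[OF B, of i s] sqrt_d by (simp add: field_simps)
  then show thesis by (rule that)
qed

text \<open>Cholesky factorisation, one index at a time: B is the Schur complement at s plus a
  rank-one matrix, and the Schur complement is supported on the remaining indices.\<close>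

lemma psd_fun_gram_supported:
  assumes "finite S" "psd_fun B" "\<And>i j. i \<notin> S \<or> j \<notin> S \<Longrightarrow> B i j = 0"
  shows "\<exists>V. \<forall>i j. B i j = (\<Sum>k\<in>S. cnj (V k i) * V k j)"
  using assms
proof (induction S arbitrary: B rule: finite_induct)
  case empty
  then show ?case by auto
next
  case (insert s S)
  define C where "C = (\<lambda>i j. B i j - B i s * B s j / B s s)"
  have "psd_fun C"
    unfolding C_def using insert.prems(1) by (rule psd_fun_schur_complement)
  moreover have "C i j = 0" if "i \<notin> S \<or> j \<notin> S" for i j
  proof (cases "i = s \<or> j = s")
    case True
    then show ?thesis
      using psd_fun_schur_complement_row[OF insert.prems(1)] unfolding C_def by auto
  next
    case False
    with that have "i \<notin> insert s S \<or> j \<notin> insert s S"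
      by auto
    then have "B i j = 0" "B i s = 0 \<or> B s j = 0"
      using insert.prems(2) by auto
    then show ?thesis
      unfolding C_def by auto
  qed
  ultimately obtain V where V: "\<And>i j. C i j = (\<Sum>k\<in>S. cnj (V k i) * V k j)"
    using insert.IH by blast
  obtain v where v: "\<And>i j. B i s * B s j / B s s = cnj (v i) * v j"
    using psd_fun_rank_one_part[where s = s, OF insert.prems(1)] by blast
  have "B i j = (\<Sum>k\<in>insert s S. cnj ((V(s := v)) k i) * (V(s := v)) k j)" for i j
  proof -
    have "(\<Sum>k\<in>S. cnj ((V(s := v)) k i) * (V(s := v)) k j) = C i j"
      unfolding V using insert.hyps by (intro sum.cong) auto
    then show ?thesis
      using insert.hyps v[of i j] by (simp add: C_def)
  qed
  then show ?case by blast
qed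

lemma psd_fun_gram:
  fixes B :: "'n::finite \<Rightarrow> 'n \<Rightarrow> complex"
  assumes "psd_fun B"
  obtains V :: "'n \<Rightarrow> 'n \<Rightarrow> complex" where "\<And>i j. B i j = (\<Sum>k\<in>UNIV. cnj (V k i) * V k j)"
proof -
  have "\<exists>V::'n \<Rightarrow> 'n \<Rightarrow> complex. \<forall>i j. B i j = (\<Sum>k\<in>UNIV. cnj (V k i) * V k j)"
    by (rule psd_fun_gram_supported) (simp_all add: assms)
  then show thesis
    using that by blast
qed

lemma cnj_mult_self_nonneg: "0 \<le> cnj z * z"
  by (simp add: less_eq_complex_def)

lemma psd_fun_gram_matrix: "psd_fun (\<lambda>i j. \<Sum>k\<in>K. cnj (V k i) * V k j)"
  unfolding psd_fun_def
proof (intro conjI allI)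
  fix x
  have "quad_form (\<lambda>i j. \<Sum>k\<in>K. cnj (V k i) * V k j) x
      = (\<Sum>i\<in>UNIV. \<Sum>j\<in>UNIV. \<Sum>k\<in>K. cnj (V k i * x i) * (V k j * x j))"
    unfolding quad_form_def by (simp add: sum_distrib_left sum_distrib_right ac_simps)
  also have "\<dots> = (\<Sum>k\<in>K. \<Sum>i\<in>UNIV. \<Sum>j\<in>UNIV. cnj (V k i * x i) * (V k j * x j))"
    by (simp add: sum.swap[where A = K])
  also have "\<dots> = (\<Sum>k\<in>K. cnj (\<Sum>i\<in>UNIV. V k i * x i) * (\<Sum>j\<in>UNIV. V k j * x j))"
    by (simp only: sum_product cnj_sum)
  also have "0 \<le> \<dots>"
    by (intro sum_nonneg cnj_mult_self_nonneg)
  finally show "0 \<le> quad_form (\<lambda>i j. \<Sum>k\<in>K. cnj (V k i) * V k j) x" .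
qed (simp add: cnj_sum mult.commute)

lemma psd_fun_tensor_product:
  fixes B :: "'t::finite \<Rightarrow> 'n::finite \<Rightarrow> 'n \<Rightarrow> complex"
  assumes "\<And>t. psd_fun (B t)"
  shows "psd_fun (\<lambda>\<rho> \<tau> :: 't \<Rightarrow> 'n. \<Prod>t\<in>UNIV. B t (\<rho> t) (\<tau> t))"
proof -
  have "\<forall>t. \<exists>V::'n \<Rightarrow> 'n \<Rightarrow> complex. \<forall>i j. B t i j = (\<Sum>k\<in>UNIV. cnj (V k i) * V k j)"
    using psd_fun_gram[OF assms] by blast
  from choice[OF this] obtain V :: "'t \<Rightarrow> 'n \<Rightarrow> 'n \<Rightarrow> complex"
    where V: "\<forall>t i j. B t i j = (\<Sum>k\<in>UNIV. cnj (V t k i) * V t k j)"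
    by blast
  have "(\<Prod>t\<in>UNIV. B t (\<rho> t) (\<tau> t))
      = (\<Sum>\<kappa>\<in>UNIV. cnj (\<Prod>t\<in>UNIV. V t (\<kappa> t) (\<rho> t)) * (\<Prod>t\<in>UNIV. V t (\<kappa> t) (\<tau> t)))"
    for \<rho> \<tau> :: "'t \<Rightarrow> 'n"
    unfolding V[rule_format] by (subst prod_sum_PiE) (simp_all add: prod.distrib cnj_prod)
  then show ?thesis
    using psd_fun_gram_matrix[where K = UNIV and V = "\<lambda>\<kappa> \<rho>. \<Prod>t\<in>UNIV. V t (\<kappa> t) (\<rho> t)"]
    by simp
qed

lemma sum_permutations_row_permuted_prod:
  fixes Y :: "'a::comm_semiring_1^'n::finite^'n"
  assumes \<rho>: "\<rho> permutes UNIV"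
  shows "(\<Sum>\<tau> | \<tau> permutes UNIV. \<Prod>t\<in>UNIV. Y $ \<rho> t $ \<tau> t) = per Y"
proof -
  have "(\<Prod>t\<in>UNIV. Y $ \<rho> t $ \<tau> t) = (\<Prod>i\<in>UNIV. Y $ i $ (\<tau> \<circ> inv \<rho>) i)" for \<tau>
    using prod.permute[OF permutes_inv[OF \<rho>], of "\<lambda>t. Y $ \<rho> t $ \<tau> t"]
      permutes_inverses(1)[OF \<rho>] by simp
  then show ?thesis
    unfolding per_def
    using sum_permutations_compose_right[OF permutes_inv[OF \<rho>], of "\<lambda>\<sigma>. \<Prod>i\<in>UNIV. Y $ i $ \<sigma> i"]
    by simp
qed

lemma sum_permutations_pair_prod:
  fixes Y :: "'a::comm_semiring_1^'n::finite^'n"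
  shows "(\<Sum>\<rho> | \<rho> permutes UNIV. \<Sum>\<tau> | \<tau> permutes UNIV. \<Prod>t\<in>UNIV. Y $ \<rho> t $ \<tau> t)
    = of_nat (fact CARD('n)) * per Y"
  by (simp add: sum_permutations_row_permuted_prod card_permutations)

definition per_weight :: "('k \<Rightarrow> 'a::comm_semiring_1^'n::finite^'n) \<Rightarrow> ('n \<Rightarrow> 'k) \<Rightarrow> 'a" where
  "per_weight A f =
    (\<Sum>\<rho> | \<rho> permutes UNIV. \<Sum>\<tau> | \<tau> permutes UNIV. \<Prod>t\<in>UNIV. A (f t) $ \<rho> t $ \<tau> t)"

lemma fact_per_sum_eq_sum_per_weight:
  fixes A :: "'k \<Rightarrow> 'a::comm_semiring_1^'n::finite^'n"
  assumes "finite K"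
  shows "of_nat (fact CARD('n)) * per (\<Sum>k\<in>K. A k) = (\<Sum>f \<in> PiE UNIV (\<lambda>_. K). per_weight A f)"
proof -
  have "of_nat (fact CARD('n)) * per (\<Sum>k\<in>K. A k) =
      (\<Sum>\<rho> | \<rho> permutes UNIV. \<Sum>\<tau> | \<tau> permutes UNIV. \<Sum>f \<in> PiE UNIV (\<lambda>_. K).
        \<Prod>t\<in>UNIV. A (f t) $ \<rho> t $ \<tau> t)"
    unfolding sum_permutations_pair_prod[symmetric] using assms by (simp add: prod_sum_PiE)
  then show ?thesis
    unfolding per_weight_def by (simp add: sum.swap[where B = "PiE UNIV (\<lambda>_. K)"])
qed

lemma per_weight_nonneg:
  fixes A :: "'k \<Rightarrow> complex^'n::finite^'n"
  assumes "\<And>t. psd (A (f t))"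
  shows "0 \<le> per_weight A f"
proof -
  let ?x = "\<lambda>\<rho>::'n \<Rightarrow> 'n. if \<rho> permutes UNIV then 1 else (0::complex)"
  have "psd_fun (\<lambda>\<rho> \<tau> :: 'n \<Rightarrow> 'n. \<Prod>t\<in>UNIV. A (f t) $ \<rho> t $ \<tau> t)"
    using psd_imp_psd_fun[OF assms] by (rule psd_fun_tensor_product)
  then have "0 \<le> quad_form (\<lambda>\<rho> \<tau>. \<Prod>t\<in>UNIV. A (f t) $ \<rho> t $ \<tau> t) ?x"
    by (rule psd_fun_quad_form_nonneg)
  also have "\<dots> = per_weight A f"
    unfolding quad_form_def per_weight_def
    by (simp add: if_distrib[of cnj] if_distrib[of "\<lambda>y. y * _"] if_distrib[of "\<lambda>y. _ * y"]
        sum.If_cases if_distrib[of "\<lambda>S. _ \<inter> S"] if_distrib[of "sum _"] cong: if_cong)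
  finally show ?thesis .
qed

lemma fact_per_sum_eq_sum_by_range:
  fixes A :: "'k \<Rightarrow> 'a::comm_semiring_1^'n::finite^'n"
  assumes "finite K"
  shows "of_nat (fact CARD('n)) * per (\<Sum>k\<in>K. A k)
    = (\<Sum>L\<in>Pow K. \<Sum>f | range f = L. per_weight A f)"
proof -
  have fin: "finite (PiE UNIV (\<lambda>_::'n. K))"
    using assms by (simp add: finite_PiE)
  have "{f \<in> PiE UNIV (\<lambda>_. K). range f = L} = {f. range f = L}" if "L \<in> Pow K" for L
    using that by (auto simp: PiE_UNIV_domain)
  then have "(\<Sum>L\<in>Pow K. \<Sum>f | range f = L. per_weight A f)
      = (\<Sum>L\<in>Pow K. \<Sum>f | f \<in> PiE UNIV (\<lambda>_. K) \<and> range f = L. per_weight A f)"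
    by (intro sum.cong) auto
  also have "\<dots> = (\<Sum>f \<in> PiE UNIV (\<lambda>_. K). per_weight A f)"
    using assms fin by (intro sum.group) (auto simp: PiE_UNIV_domain)
  finally show ?thesis
    using fact_per_sum_eq_sum_per_weight[OF assms] by simp
qed

lemma nonneg_of_nat_mult_cancel: "0 \<le> of_nat n * (z::complex) \<Longrightarrow> 0 < n \<Longrightarrow> 0 \<le> z"
  by (auto simp: less_eq_complex_def zero_le_mult_iff)

theorem per_alternating_sum_nonneg:
  fixes A :: "'k \<Rightarrow> complex^'n::finite^'n"
  assumes "finite K" and psd_A: "\<And>k. k \<in> K \<Longrightarrow> psd (A k)"
  shows "0 \<le> (\<Sum>T\<in>Pow K. (-1) ^ (card K - card T) * per (\<Sum>k\<in>T. A k))"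
proof -
  define w where "w L = (\<Sum>f | range f = L. per_weight A f)" for L :: "'k set"
  define c :: complex where "c = of_nat (fact CARD('n))"
  have "w K = (\<Sum>T\<in>Pow K. (-1) ^ (card K - card T) * (c * per (\<Sum>k\<in>T. A k)))"
    using inclusion_exclusion_mobius[OF fact_per_sum_eq_sum_by_range \<open>finite K\<close>]
    unfolding w_def c_def .
  also have "\<dots> = c * (\<Sum>T\<in>Pow K. (-1) ^ (card K - card T) * per (\<Sum>k\<in>T. A k))"
    by (simp add: sum_distrib_left ac_simps)
  moreover have "0 \<le> w K"
    unfolding w_def using psd_A by (intro sum_nonneg per_weight_nonneg) auto
  ultimately have "0 \<le> c * (\<Sum>T\<in>Pow K. (-1) ^ (card K - card T) * per (\<Sum>k\<in>T. A k))"
    by simp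
  then show ?thesis
    unfolding c_def by (rule nonneg_of_nat_mult_cancel) simp
qed

lemma per_zero: "per (0 :: 'a::comm_semiring_1^'n::finite^'n) = 0"
  by (simp add: per_def zero_power)

theorem corollary3p3:
  fixes A1 A2 A3 :: "complex^'n::finite^'n"
  assumes "psd A1" and "psd A2" and "psd A3"
  shows "per (A1 + A2 + A3) + per A1 + per A2 + per A3
           \<ge> per (A1 + A2) + per (A1 + A3) + per (A2 + A3)"
proof -
  define A where "A = (!) [A1, A2, A3]"
  have "0 \<le> (\<Sum>T\<in>Pow {0, 1, 2}. (-1) ^ (card {0, 1, 2::nat} - card T) * per (\<Sum>k\<in>T. A k))"
    using assms by (intro per_alternating_sum_nonneg) (auto simp: A_def)
  also have "\<dots> = per (A1 + A2 + A3) - per (A1 + A2) - per (A1 + A3) - per (A2 + A3)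
      + per A1 + per A2 + per A3"
    by (simp add: A_def Pow_insert sum.union_disjoint image_Un sum.reindex inj_on_def
        insert_commute doubleton_eq_iff insert_eq_iff per_zero add.assoc)
  finally show ?thesis
    by (simp add: algebra_simps)
qed

end
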